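(* Let $R$ be a ring and $n \geq 3$ an integer. Then the following are equivalent: the direct power $R^n$ is a GSWNC ring; $R^n$ is a GSNC ring; $R$ is strongly nil-clean.
   Context: All rings are associative with identity. An element $a$ of a ring is strongly nil-clean if $a = e + q$ with $e$ idempotent, $q$ nilpotent and $eq = qe$; it is strongly weakly nil-clean if there exist an idempotent $e$ and a nilpotent $q$ with $eq = qe$ such that $a = q + e$ or $a = q - e$. A ring is strongly nil-clean if all its elements are; it is GSNC if every non-invertible element is strongly nil-clean, and GSWNC if every non-invertible element is strongly weakly nil-clean. *)

theory Defs
  imports "HOL-Analysis.Analysis"
begin

definition idempotent_el :: "'a::ring_1 \<Rightarrow> bool" where
  "idempotent_el e \<longleftrightarrow> e * e = e"

definition nilpotent_el :: "'a::ring_1 \<Rightarrow> bool" where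
  "nilpotent_el q \<longleftrightarrow> (\<exists>k::nat. q ^ k = 0)"

definition invertible_el :: "'a::ring_1 \<Rightarrow> bool" where
  "invertible_el a \<longleftrightarrow> (\<exists>b. a * b = 1 \<and> b * a = 1)"

definition strongly_nil_clean_el :: "'a::ring_1 \<Rightarrow> bool" where
  "strongly_nil_clean_el a \<longleftrightarrow>
     (\<exists>e q. idempotent_el e \<and> nilpotent_el q \<and> e * q = q * e \<and> a = e + q)"

definition strongly_weakly_nil_clean_el :: "'a::ring_1 \<Rightarrow> bool" where
  "strongly_weakly_nil_clean_el a \<longleftrightarrow>
     (\<exists>e q. idempotent_el e \<and> nilpotent_el q \<and> e * q = q * e \<and> (a = q + e \<or> a = q - e))"

definition strongly_nil_clean_ring :: "'a::ring_1 itself \<Rightarrow> bool" where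
  "strongly_nil_clean_ring _ \<longleftrightarrow> (\<forall>a::'a. strongly_nil_clean_el a)"

definition GSNC_ring :: "'a::ring_1 itself \<Rightarrow> bool" where
  "GSNC_ring _ \<longleftrightarrow> (\<forall>a::'a. \<not> invertible_el a \<longrightarrow> strongly_nil_clean_el a)"

definition GSWNC_ring :: "'a::ring_1 itself \<Rightarrow> bool" where
  "GSWNC_ring _ \<longleftrightarrow> (\<forall>a::'a. \<not> invertible_el a \<longrightarrow> strongly_weakly_nil_clean_el a)"

end

theory Submission
  imports Defs
begin

text \<open>Strong nil-cleanness of a vector is the same as strong nil-cleanness of each of its
  entries: decompositions are taken componentwise, and finitely many nilpotency indices have a
  common bound. Moreover \<open>a = q - e\<close> just says that \<open>-a = e + (-q)\<close> is strongly nil-clean, so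
  \<open>a\<close> is strongly weakly nil-clean iff \<open>a\<close> or \<open>-a\<close> is strongly nil-clean. Now if \<open>R\<^sup>n\<close> is GSWNC
  and \<open>a \<in> R\<close>, the vector \<open>(a, -a, 0, \<dots>, 0)\<close> has a zero entry (this needs \<open>n \<ge> 3\<close>), so it is
  not invertible; hence it or its negative is strongly nil-clean, and its first resp. second
  entry shows that \<open>a\<close> is strongly nil-clean.\<close>

lemma vec_power_nth: "((x::'a::ring_1 ^ 'n) ^ k) $ i = (x $ i) ^ k"
  by (induction k) auto

lemma power_eq_zero_mono: "(x::'a::ring_1) ^ k = 0 \<Longrightarrow> k \<le> m \<Longrightarrow> x ^ m = 0"
  by (metis le_add_diff_inverse mult_zero_left power_add)

lemma idempotent_el_vec_iff: "idempotent_el (x::'a::ring_1 ^ 'n) \<longleftrightarrow> (\<forall>i. idempotent_el (x $ i))"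
  by (simp add: idempotent_el_def vec_eq_iff)

lemma nilpotent_el_vec_iff:
  "nilpotent_el (x::'a::ring_1 ^ 'n::finite) \<longleftrightarrow> (\<forall>i. nilpotent_el (x $ i))"
proof
  assume "nilpotent_el x"
  then show "\<forall>i. nilpotent_el (x $ i)"
    unfolding nilpotent_el_def by (metis vec_power_nth zero_index)
next
  assume "\<forall>i. nilpotent_el (x $ i)"
  then obtain K where K: "\<And>i. (x $ i) ^ K i = 0"
    unfolding nilpotent_el_def by metis
  have "K i \<le> (\<Sum>j\<in>UNIV. K j)" for i
    by (rule member_le_sum) auto
  then have "x ^ (\<Sum>j\<in>UNIV. K j) = 0"
    using K power_eq_zero_mono by (simp add: vec_eq_iff vec_power_nth) blast
  then show "nilpotent_el x"
    unfolding nilpotent_el_def by blast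
qed

lemma nilpotent_el_uminus: "nilpotent_el (q::'a::ring_1) \<Longrightarrow> nilpotent_el (- q)"
  unfolding nilpotent_el_def by (metis power_minus mult_zero_right)

lemma strongly_nil_clean_el_vec_iff:
  "strongly_nil_clean_el (x::'a::ring_1 ^ 'n::finite) \<longleftrightarrow> (\<forall>i. strongly_nil_clean_el (x $ i))"
proof
  assume "strongly_nil_clean_el x"
  then obtain e q where "idempotent_el e" "nilpotent_el q" "e * q = q * e" "x = e + q"
    unfolding strongly_nil_clean_el_def by blast
  then show "\<forall>i. strongly_nil_clean_el (x $ i)"
    unfolding strongly_nil_clean_el_def idempotent_el_vec_iff nilpotent_el_vec_iff
    by (metis vector_mult_component vector_add_component)
next
  assume "\<forall>i. strongly_nil_clean_el (x $ i)"
  then obtain E Q where EQ: "\<And>i. idempotent_el (E i)" "\<And>i. nilpotent_el (Q i)"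
      "\<And>i. E i * Q i = Q i * E i" "\<And>i. x $ i = E i + Q i"
    unfolding strongly_nil_clean_el_def by metis
  have "idempotent_el (\<chi> i. E i)" "nilpotent_el (\<chi> i. Q i)"
    using EQ by (simp_all add: idempotent_el_vec_iff nilpotent_el_vec_iff)
  moreover have "(\<chi> i. E i) * (\<chi> i. Q i) = (\<chi> i. Q i) * (\<chi> i. E i)" "x = (\<chi> i. E i) + (\<chi> i. Q i)"
    using EQ by (simp_all add: vec_eq_iff)
  ultimately show "strongly_nil_clean_el x"
    unfolding strongly_nil_clean_el_def by blast
qed

lemma strongly_weakly_nil_clean_el_iff:
  "strongly_weakly_nil_clean_el (a::'a::ring_1) \<longleftrightarrow> strongly_nil_clean_el a \<or> strongly_nil_clean_el (- a)"
proof
  assume "strongly_weakly_nil_clean_el a"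
  then obtain e q where eq: "idempotent_el e" "nilpotent_el q" "e * q = q * e"
      and "a = q + e \<or> a = q - e"
    unfolding strongly_weakly_nil_clean_el_def by blast
  then consider "a = e + q" | "- a = e + (- q)"
    by (metis add.commute minus_diff_eq diff_conv_add_uminus)
  then show "strongly_nil_clean_el a \<or> strongly_nil_clean_el (- a)"
  proof cases
    case 1
    then show ?thesis
      using eq unfolding strongly_nil_clean_el_def by blast
  next
    case 2
    moreover have "e * (- q) = (- q) * e"
      using eq(3) by simp
    ultimately show ?thesis
      using eq(1) nilpotent_el_uminus[OF eq(2)] unfolding strongly_nil_clean_el_def by blast
  qed
next
  assume "strongly_nil_clean_el a \<or> strongly_nil_clean_el (- a)"
  then show "strongly_weakly_nil_clean_el a"
  proof
    assume "strongly_nil_clean_el a"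
    then show ?thesis
      unfolding strongly_nil_clean_el_def strongly_weakly_nil_clean_el_def
      by (metis add.commute)
  next
    assume "strongly_nil_clean_el (- a)"
    then obtain e q where eq: "idempotent_el e" "nilpotent_el q" "e * q = q * e" "- a = e + q"
      unfolding strongly_nil_clean_el_def by blast
    then have "a = - q - e"
      by (metis minus_minus minus_add_distrib add.commute diff_conv_add_uminus)
    moreover have "e * (- q) = (- q) * e"
      using eq(3) by simp
    ultimately show ?thesis
      using eq(1) nilpotent_el_uminus[OF eq(2)] unfolding strongly_weakly_nil_clean_el_def by blast
  qed
qed

lemma strongly_nil_clean_el_if_one_eq_zero:
  assumes "(1::'a::ring_1) = 0"
  shows "strongly_nil_clean_el (a::'a)"
proof -
  have "a = 0"
    by (metis assms mult_1 mult_zero_left)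
  moreover have "idempotent_el (0::'a)" "nilpotent_el (0::'a)"
    unfolding idempotent_el_def nilpotent_el_def by (auto intro: exI[of _ 1])
  ultimately show ?thesis
    unfolding strongly_nil_clean_el_def by force
qed

lemma not_invertible_el_vec_if_zero_component:
  assumes "(1::'a::ring_1) \<noteq> 0" and "(x::'a ^ 'n::finite) $ k = 0"
  shows "\<not> invertible_el x"
proof
  assume "invertible_el x"
  then obtain y where "x * y = 1"
    unfolding invertible_el_def by blast
  then have "(x * y) $ k = 1 $ k"
    by simp
  then show False
    using assms by simp
qed

lemma strongly_nil_clean_ring_vec:
  "strongly_nil_clean_ring TYPE('a::ring_1) \<Longrightarrow> strongly_nil_clean_ring TYPE('a ^ 'n::finite)"
  by (simp add: strongly_nil_clean_ring_def strongly_nil_clean_el_vec_iff)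

lemma GSNC_ring_if_strongly_nil_clean_ring:
  "strongly_nil_clean_ring TYPE('a::ring_1) \<Longrightarrow> GSNC_ring TYPE('a)"
  by (simp add: strongly_nil_clean_ring_def GSNC_ring_def)

lemma GSWNC_ring_if_GSNC_ring: "GSNC_ring TYPE('a::ring_1) \<Longrightarrow> GSWNC_ring TYPE('a)"
  by (simp add: GSNC_ring_def GSWNC_ring_def strongly_weakly_nil_clean_el_iff)

lemma strongly_nil_clean_ring_if_GSWNC_ring_vec:
  assumes "CARD('n::finite) \<ge> 3" and "GSWNC_ring TYPE('a::ring_1 ^ 'n)"
  shows "strongly_nil_clean_ring TYPE('a)"
  unfolding strongly_nil_clean_ring_def
proof
  fix a :: 'a
  show "strongly_nil_clean_el a"
  proof (cases "(1::'a) = 0")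
    case True
    then show ?thesis
      by (rule strongly_nil_clean_el_if_one_eq_zero)
  next
    case False
    obtain i j k :: 'n where "i \<noteq> j" "k \<noteq> i" "k \<noteq> j"
    proof -
      obtain S :: "'n set" where "card S = 3"
        using obtain_subset_with_card_n[OF assms(1)] by metis
      then show ?thesis
        using that unfolding card_3_iff by metis
    qed
    define x :: "'a ^ 'n" where "x = (\<chi> t. if t = i then a else if t = j then - a else 0)"
    have "\<not> invertible_el x"
      using not_invertible_el_vec_if_zero_component[OF False, of x k] \<open>k \<noteq> i\<close> \<open>k \<noteq> j\<close>
      by (simp add: x_def)
    then have "strongly_nil_clean_el x \<or> strongly_nil_clean_el (- x)"
      using assms(2) by (simp add: GSWNC_ring_def strongly_weakly_nil_clean_el_iff)
    then consider "strongly_nil_clean_el (x $ i)" | "strongly_nil_clean_el ((- x) $ j)"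
      unfolding strongly_nil_clean_el_vec_iff by blast
    then show ?thesis
      using \<open>i \<noteq> j\<close> by cases (simp_all add: x_def)
  qed
qed

theorem corollary2p8:
  assumes "CARD('n::finite) \<ge> 3"
  shows "(GSWNC_ring TYPE('a::ring_1 ^ 'n) \<longleftrightarrow> GSNC_ring TYPE('a ^ 'n))
       \<and> (GSNC_ring TYPE('a ^ 'n) \<longleftrightarrow> strongly_nil_clean_ring TYPE('a))"
  using GSWNC_ring_if_GSNC_ring GSNC_ring_if_strongly_nil_clean_ring strongly_nil_clean_ring_vec
    strongly_nil_clean_ring_if_GSWNC_ring_vec[OF assms]
  by blast

end
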